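(* Given a quantum state $\rho$ and a list of observables $(X_{1},\dots,X_{d})$ on a finite dimensional Hilbert space $\mathcal{H}$, let $A$ and $J$ be the $d\times d$ nonnegative matrices whose $(i,j)$th entries are $A_{ij}=\mathrm{Tr}\,\sqrt{\rho}X_{j}\sqrt{\rho}X_{i}$ and $J_{ij}=\mathrm{Tr}\,\rho X_{j}X_{i}$. Then both $A$ and $J\#J^{\top}$ are real matrices and satisfy \[ A\leq J\#J^{\top}, \] where $\#$ denotes the operator geometric mean.
   Context: Here $\mathcal{H}$ is a finite dimensional complex Hilbert space, a quantum state is a density operator $\rho\ge 0$ with $\mathrm{Tr}\,\rho=1$, and observables are selfadjoint operators on $\mathcal{H}$. For positive semidefinite matrices $P,Q$, the operator geometric mean $P\#Q$ (Kubo–Ando) can be characterized as $P\#Q=\max\left\{ X\geq0 : \begin{pmatrix}P & X \\ X & Q \end{pmatrix} \geq 0 \right\}$. $J^{\top}$ denotes the transpose of $J$ (equivalently its complex conjugate, since $J$ is Hermitian). *)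

theory Defs
  imports "HOL-Analysis.Analysis"
begin

definition adjoint_mat :: "complex^'n^'m \<Rightarrow> complex^'m^'n" where
  "adjoint_mat A = (\<chi> i j. cnj (A $ j $ i))"

definition hermitian_mat :: "complex^'n^'n \<Rightarrow> bool" where
  "hermitian_mat A \<longleftrightarrow> adjoint_mat A = A"

definition psd :: "complex^'n^'n \<Rightarrow> bool" where
  "psd A \<longleftrightarrow> hermitian_mat A \<and>
     (\<forall>v::complex^'n. Im (\<Sum>i\<in>UNIV. cnj (v $ i) * (A *v v) $ i) = 0 \<and>
                       0 \<le> Re (\<Sum>i\<in>UNIV. cnj (v $ i) * (A *v v) $ i))"

definition loewner_le :: "complex^'n^'n \<Rightarrow> complex^'n^'n \<Rightarrow> bool" where
  "loewner_le A B \<longleftrightarrow> psd (B - A)"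

definition mat_sqrt :: "complex^'n^'n \<Rightarrow> complex^'n^'n" where
  "mat_sqrt A = (THE B. psd B \<and> B ** B = A)"

definition density_op :: "complex^'n^'n \<Rightarrow> bool" where
  "density_op \<rho> \<longleftrightarrow> psd \<rho> \<and> trace \<rho> = 1"

definition block2 :: "complex^'d^'d \<Rightarrow> complex^'d^'d \<Rightarrow> complex^'d^'d \<Rightarrow> complex^'d^'d
    \<Rightarrow> complex^('d + 'd)^('d + 'd)" where
  "block2 P X Y Q = (\<chi> i j. case (i, j) of
      (Inl a, Inl b) \<Rightarrow> P $ a $ b
    | (Inl a, Inr b) \<Rightarrow> X $ a $ b
    | (Inr a, Inl b) \<Rightarrow> Y $ a $ b
    | (Inr a, Inr b) \<Rightarrow> Q $ a $ b)"

text \<open>Kubo-Ando geometric mean via its maximal characterisation: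
  the Loewner-maximum of {X >= 0 : [[P, X],[X, Q]] >= 0}.\<close>
definition geo_mean :: "complex^'d^'d \<Rightarrow> complex^'d^'d \<Rightarrow> complex^'d^'d" (infixl "#" 70) where
  "geo_mean P Q = (THE X. psd X \<and> psd (block2 P X X Q) \<and>
       (\<forall>Y. psd Y \<and> psd (block2 P Y Y Q) \<longrightarrow> loewner_le Y X))"

definition real_mat :: "complex^'d^'d \<Rightarrow> bool" where
  "real_mat A \<longleftrightarrow> (\<forall>i j. Im (A $ i $ j) = 0)"

end

theory Submission
  imports Defs
begin

(* Write S for the square root of rho and L v = sum_j v_j X_j.  The quadratic forms of the three
   matrices are traces of Gram type: <v, J v> = Tr ((S L v) (S L v)^H) and
   <v, A v> = Tr ((R L v R) (R L v R)^H) with R the square root of S, and the form of the block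
   matrix [[J, A], [A, J^T]] at (u, w) is Tr (N N^H) with N = S L u + L w S.  Hence A >= 0 and the
   block matrix is positive semidefinite, so A lies below the Loewner-largest such matrix J # J^T.
   A is real by cyclicity of the trace.  For a Hermitian J we have J^T = conj J, and entrywise
   conjugation followed by swapping the two diagonal blocks maps the extremal problem for
   (J, conj J) to itself, so by uniqueness of the maximum J # J^T is real.

   That the maximum exists at all is the main work: for invertible P it is
   P^(1/2) (P^(-1/2) Q P^(-1/2))^(1/2) P^(1/2), and in general it is the limit of the decreasing
   sequence of geometric means of P + eI and Q + eI as e decreases to 0.  Square roots come from the
   spectral theorem, proved by maximising the Rayleigh quotient on orthogonal complements. *)

section \<open>Complex vectors and matrices\<close>

definition cinner :: "complex^'n \<Rightarrow> complex^'n \<Rightarrow> complex" where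
  "cinner v w = (\<Sum>i\<in>UNIV. cnj (v $ i) * w $ i)"

lemma cinner_cnj: "cnj (cinner v w) = cinner w v"
  by (simp add: cinner_def mult.commute)

lemma cinner_add_left: "cinner (v + v') w = cinner v w + cinner v' w"
  and cinner_add_right: "cinner v (w + w') = cinner v w + cinner v w'"
  and cinner_diff_left: "cinner (v - v') w = cinner v w - cinner v' w"
  and cinner_diff_right: "cinner v (w - w') = cinner v w - cinner v w'"
  and cinner_minus_left: "cinner (- v) w = - cinner v w"
  and cinner_minus_right: "cinner v (- w) = - cinner v w"
  and cinner_scale_left: "cinner (c *s v) w = cnj c * cinner v w"
  and cinner_scale_right: "cinner v (c *s w) = c * cinner v w"
  by (simp_all add: cinner_def algebra_simps sum.distrib sum_subtractf sum_negf sum_distrib_left)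

lemma cinner_scaleR_left: "cinner (a *\<^sub>R v) w = of_real a * cinner v w"
  and cinner_scaleR_right: "cinner v (a *\<^sub>R w) = of_real a * cinner v w"
  by (simp_all add: cinner_def sum_distrib_left algebra_simps scaleR_conv_of_real[where 'a=complex])

lemma cinner_zero_right [simp]: "cinner v 0 = 0"
  by (simp add: cinner_def)

lemma cinner_sum_right: "cinner v (\<Sum>k\<in>S. F k) = (\<Sum>k\<in>S. cinner v (F k))"
  by (induction S rule: infinite_finite_induct) (auto simp: cinner_add_right)

lemma cinner_self_norm: "cinner v v = of_real ((norm v)\<^sup>2)"
proof -
  have "cinner v v = (\<Sum>i\<in>UNIV. of_real ((cmod (v $ i))\<^sup>2))"
    unfolding cinner_def by (simp only: complex_norm_square mult.commute)
  also have "\<dots> = of_real ((norm v)\<^sup>2)"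
    unfolding norm_vec_def L2_set_def of_real_sum by (simp add: sum_nonneg)
  finally show ?thesis .
qed

lemma cinner_self_eq_0_iff [simp]: "cinner v v = 0 \<longleftrightarrow> v = 0"
  and Re_cinner_self_nonneg: "0 \<le> Re (cinner v v)"
  by (simp_all add: cinner_self_norm)

lemma cinner_axis_left: "cinner (axis i 1) w = w $ i"
  by (simp add: cinner_def axis_def if_distrib if_distribR cong: if_cong)

lemma cinner_axis_right: "cinner v (axis j 1) = cnj (v $ j)"
  by (simp add: cinner_def axis_def if_distrib cong: if_cong)

lemma continuous_on_cinner_right: "continuous_on S (\<lambda>v. cinner b v)"
  unfolding cinner_def by (intro continuous_intros)

lemma continuous_on_cinner_quadratic: "continuous_on S (\<lambda>v. Re (cinner v (A *v (v::complex^'n))))"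
proof -
  have "cinner v (A *v v) = (\<Sum>i\<in>UNIV. \<Sum>j\<in>UNIV. cnj (v $ i) * A $ i $ j * v $ j)" for v
    by (simp add: cinner_def matrix_vector_mult_def sum_distrib_left mult.assoc)
  then show ?thesis by (simp only:) (intro continuous_intros)
qed

lemma matrix_vector_mult_scale: "A *v (c *s v) = c *s (A *v (v::complex^'n))"
  by (simp add: vec_eq_iff matrix_vector_mult_def sum_distrib_left algebra_simps)

lemma matrix_vector_mult_scaleR_complex: "A *v (a *\<^sub>R v) = a *\<^sub>R (A *v (v::complex^'n))"
  by (simp add: vec_eq_iff matrix_vector_mult_def sum_distrib_left algebra_simps
      scaleR_conv_of_real[where 'a=complex])

lemma matrix_vector_mult_minus: "A *v (- v) = - (A *v (v::complex^'n))"
  by (simp add: vec_eq_iff matrix_vector_mult_def sum_negf)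

lemma mat_matrix_vector_mult: "mat c *v v = c *s (v::complex^'n)"
  by (simp add: vec_eq_iff matrix_vector_mult_def mat_def if_distrib if_distribR cong: if_cong)

lemma scale_of_real_eq_scaleR: "of_real a *s v = a *\<^sub>R (v::complex^'n)"
  by (simp add: vec_eq_iff scaleR_conv_of_real[where 'a=complex])

lemma sum_matrix_vector_mult: "(\<Sum>k\<in>S. F k) *v (v::complex^'n) = (\<Sum>k\<in>S. F k *v v)"
  by (induction S rule: infinite_finite_induct) (auto simp: matrix_vector_mult_add_rdistrib)

lemma matrix_mult_sum_right: "(M::complex^'n^'m) ** (\<Sum>k\<in>S. F k) = (\<Sum>k\<in>S. M ** F k)"
  by (induction S rule: infinite_finite_induct) (auto simp: matrix_add_ldistrib)

lemma matrix_mult_sum_left: "(\<Sum>k\<in>S. F k) ** (M::complex^'n^'m) = (\<Sum>k\<in>S. F k ** M)"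
  by (induction S rule: infinite_finite_induct)
    (auto simp: matrix_matrix_mult_def vec_eq_iff sum.distrib algebra_simps)

lemma matrix_diff_ldistrib: "(C::complex^'n^'m) ** (A - B) = C ** A - C ** B"
  and matrix_diff_rdistrib: "(A - B) ** (C::complex^'n^'m) = A ** C - B ** C"
  by (simp_all add: matrix_matrix_mult_def vec_eq_iff sum_subtractf algebra_simps)

lemma matrix_add_rdistrib: "(A + B) ** (C::complex^'n^'m) = A ** C + B ** C"
  by (simp add: matrix_matrix_mult_def vec_eq_iff sum.distrib algebra_simps)

lemma trace_sum: "trace (\<Sum>k\<in>S. F k) = (\<Sum>k\<in>S. trace (F k :: complex^'n^'n))"
  by (induction S rule: infinite_finite_induct) (auto simp: trace_add trace_0[simplified])

lemma matrix_entry_cinner: "M $ i $ j = cinner (axis i 1) (M *v axis j 1)"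
proof -
  have "(M *v axis j 1) $ i = M $ i $ j"
    by (simp add: matrix_vector_mult_def axis_def if_distrib cong: if_cong)
  then show ?thesis by (simp add: cinner_axis_left)
qed

lemma cinner_polarization:
  "cinner x (M *v y) = (1/4) * (cinner (y + x) (M *v (y + x)) - cinner (y - x) (M *v (y - x))
     + \<i> * cinner (y + \<i> *s x) (M *v (y + \<i> *s x)) - \<i> * cinner (y - \<i> *s x) (M *v (y - \<i> *s x)))"
  by (simp add: matrix_vector_right_distrib matrix_vector_mult_diff_distrib matrix_vector_mult_scale
      cinner_add_left cinner_add_right cinner_diff_left cinner_diff_right
      cinner_scale_left cinner_scale_right algebra_simps)

lemma matrix_eq_if_cinner_eq:
  assumes "\<And>v. cinner v (M *v v) = cinner v (N *v (v::complex^'n))"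
  shows "M = N"
proof -
  have "cinner x (M *v y) = cinner x (N *v y)" for x y
    unfolding cinner_polarization[of x M] cinner_polarization[of x N] assms ..
  then show ?thesis by (simp add: vec_eq_iff matrix_entry_cinner)
qed

lemma cinner_adjoint: "cinner (A *v v) w = cinner v (adjoint_mat A *v w)"
proof -
  have "cinner (A *v v) w = (\<Sum>i\<in>UNIV. \<Sum>j\<in>UNIV. cnj (A$i$j) * cnj (v$j) * w$i)"
    unfolding cinner_def matrix_vector_mult_def by (simp add: sum_distrib_right)
  also have "\<dots> = (\<Sum>j\<in>UNIV. \<Sum>i\<in>UNIV. cnj (A$i$j) * cnj (v$j) * w$i)"
    by (rule sum.swap)
  also have "\<dots> = cinner v (adjoint_mat A *v w)"
    unfolding cinner_def matrix_vector_mult_def adjoint_mat_def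
    by (simp add: sum_distrib_left mult.assoc mult.left_commute)
  finally show ?thesis .
qed

lemma adjoint_mat_add: "adjoint_mat (A + B) = adjoint_mat A + adjoint_mat B"
  by (simp add: adjoint_mat_def vec_eq_iff)

lemma adjoint_mat_mult: "adjoint_mat (A ** B) = adjoint_mat B ** adjoint_mat (A::complex^'n^'m)"
  by (simp add: adjoint_mat_def matrix_matrix_mult_def vec_eq_iff mult.commute)

lemma trace_adjoint_mat: "trace (adjoint_mat M) = cnj (trace (M::complex^'n^'n))"
  by (simp add: trace_def adjoint_mat_def)

section \<open>Hermitian and positive semidefinite matrices\<close>

lemma hermitian_cinner_swap: "hermitian_mat H \<Longrightarrow> cinner (H *v v) w = cinner v (H *v w)"
  by (simp add: cinner_adjoint hermitian_mat_def)

lemma Im_cinner_hermitian: "hermitian_mat H \<Longrightarrow> Im (cinner v (H *v v)) = 0"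
  using cinner_cnj[of v "H *v v"] hermitian_cinner_swap[of H v v]
  by (metis Im_complex_of_real Reals_cnj_iff complex_is_Real_iff)

lemma cinner_hermitian_real:
  "hermitian_mat H \<Longrightarrow> cinner v (H *v v) = of_real (Re (cinner v (H *v v)))"
  by (simp add: complex_eq_iff Im_cinner_hermitian)

lemma hermitian_mat_add: "hermitian_mat A \<Longrightarrow> hermitian_mat B \<Longrightarrow> hermitian_mat (A + B)"
  and hermitian_mat_diff: "hermitian_mat A \<Longrightarrow> hermitian_mat B \<Longrightarrow> hermitian_mat (A - B)"
  and hermitian_mat_of_real: "hermitian_mat (mat (of_real a))"
  by (simp_all add: hermitian_mat_def adjoint_mat_def vec_eq_iff mat_def)

lemma hermitian_mat_one: "hermitian_mat (mat 1)"
  using hermitian_mat_of_real[of 1] by simp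

lemma hermitian_mat_square: "hermitian_mat Z \<Longrightarrow> hermitian_mat (Z ** Z)"
  by (simp add: hermitian_mat_def adjoint_mat_mult)

lemma hermitian_congruence: "hermitian_mat S \<Longrightarrow> hermitian_mat Z \<Longrightarrow> hermitian_mat (S ** Z ** S)"
  by (simp add: hermitian_mat_def adjoint_mat_mult matrix_mul_assoc)

lemma psd_iff_cinner: "psd A \<longleftrightarrow> hermitian_mat A \<and> (\<forall>v. 0 \<le> Re (cinner v (A *v v)))"
  unfolding psd_def cinner_def[symmetric] using Im_cinner_hermitian by blast

lemma psd_hermitian: "psd A \<Longrightarrow> hermitian_mat A"
  and psd_cinner_nonneg: "psd A \<Longrightarrow> 0 \<le> Re (cinner v (A *v v))"
  by (simp_all add: psd_iff_cinner)

lemma psd_congruence: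
  assumes S: "hermitian_mat S" and Z: "psd Z"
  shows "psd (S ** Z ** S)"
proof -
  have "cinner v ((S ** Z ** S) *v v) = cinner (S *v v) (Z *v (S *v v))" for v
    using hermitian_cinner_swap[OF S, of v] by (simp flip: matrix_vector_mul_assoc)
  then show ?thesis
    using Z by (simp add: psd_iff_cinner hermitian_congruence[OF S])
qed

lemma psd_shift: "psd P \<Longrightarrow> 0 \<le> e \<Longrightarrow> psd (P + mat (of_real e))"
  by (simp add: psd_iff_cinner hermitian_mat_add hermitian_mat_of_real
      matrix_vector_mult_add_rdistrib
      mat_matrix_vector_mult cinner_add_right cinner_scale_right cinner_self_norm)

lemma psd_eigenvalue_nonneg:
  assumes "psd A" "cinner x x = 1" "A *v x = c *\<^sub>R x"
  shows "0 \<le> c"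
  using psd_cinner_nonneg[OF assms(1), of x] assms(2,3) by (simp add: cinner_scaleR_right)

lemma loewner_le_antisym:
  assumes "loewner_le A B" "loewner_le B A"
  shows "A = B"
proof (rule matrix_eq_if_cinner_eq)
  fix v
  have "(A - B) *v v = - ((B - A) *v v)"
    by (simp add: matrix_vector_mult_diff_rdistrib)
  then have "Re (cinner v ((B - A) *v v)) = 0"
    using assms psd_cinner_nonneg[of "B - A" v] psd_cinner_nonneg[of "A - B" v]
    by (simp add: loewner_le_def cinner_minus_right)
  moreover have "Im (cinner v ((B - A) *v v)) = 0"
    using assms(1) by (simp add: loewner_le_def Im_cinner_hermitian psd_hermitian)
  ultimately show "cinner v (A *v v) = cinner v (B *v v)"
    by (simp add: complex_eq_iff matrix_vector_mult_diff_rdistrib cinner_diff_right)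
qed

lemma trace_mult_adjoint_self:
  "trace (N ** adjoint_mat N) = of_real (\<Sum>i\<in>UNIV. \<Sum>k\<in>UNIV. (cmod (N $ i $ k))\<^sup>2)"
  unfolding trace_def matrix_matrix_mult_def adjoint_mat_def of_real_sum
  by (simp only: vec_lambda_beta complex_norm_square)

lemma psd_if_cinner_trace_gram:
  fixes K :: "complex^'n^'n"
  assumes gram: "\<And>v. \<exists>N::complex^'m^'m. cinner v (K *v v) = trace (N ** adjoint_mat N)"
  shows "psd K"
proof -
  have real: "cinner v (K *v v) = of_real (Re (cinner v (K *v v)))"
    and nonneg: "0 \<le> Re (cinner v (K *v v))" for v
    using gram[of v] by (auto simp: trace_mult_adjoint_self sum_nonneg)
  have "adjoint_mat K = K"
  proof (rule matrix_eq_if_cinner_eq)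
    fix v
    have "cinner v (adjoint_mat K *v v) = cnj (cinner v (K *v v))"
      by (simp add: cinner_adjoint[symmetric] cinner_cnj)
    also have "\<dots> = cinner v (K *v v)"
      by (metis real complex_cnj_complex_of_real)
    finally show "cinner v (adjoint_mat K *v v) = cinner v (K *v v)" .
  qed
  then show ?thesis using nonneg by (simp add: psd_iff_cinner hermitian_mat_def)
qed

lemma psd_limit:
  fixes A :: "nat \<Rightarrow> complex^'n^'n"
  assumes psd: "\<And>k. psd (A k)" and lim: "\<And>i j. (\<lambda>k. A k $ i $ j) \<longlonglongrightarrow> B $ i $ j"
  shows "psd B"
proof -
  have "hermitian_mat B"
    unfolding hermitian_mat_def adjoint_mat_def vec_eq_iff
  proof (intro allI)
    fix i j
    have "A k $ i $ j = cnj (A k $ j $ i)" for k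
      using psd_hermitian[OF psd[of k]] by (simp add: hermitian_mat_def adjoint_mat_def vec_eq_iff)
    then have "(\<lambda>k. A k $ i $ j) \<longlonglongrightarrow> cnj (B $ j $ i)" using tendsto_cnj[OF lim[of j i]] by simp
    then show "(\<chi> i j. cnj (B $ j $ i)) $ i $ j = B $ i $ j"
      using lim[of i j] LIMSEQ_unique by force
  qed
  moreover have "0 \<le> Re (cinner v (B *v v))" for v
  proof -
    have "cinner v (M *v v) = (\<Sum>i\<in>UNIV. \<Sum>j\<in>UNIV. cnj (v $ i) * M $ i $ j * v $ j)" for M
      by (simp add: cinner_def matrix_vector_mult_def sum_distrib_left mult.assoc)
    then have "(\<lambda>k. cinner v (A k *v v)) \<longlonglongrightarrow> cinner v (B *v v)"
      by (simp only:) (intro tendsto_intros lim)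
    then show ?thesis
      by (rule LIMSEQ_le_const[OF tendsto_Re]) (use psd_cinner_nonneg[OF psd] in auto)
  qed
  ultimately show ?thesis by (simp add: psd_iff_cinner)
qed

lemma decreasing_psd_converges:
  fixes M :: "nat \<Rightarrow> complex^'n^'n"
  assumes psd: "\<And>k. psd (M k)" and dec: "\<And>k m. k \<le> m \<Longrightarrow> loewner_le (M m) (M k)"
  shows "\<exists>L. \<forall>i j. (\<lambda>k. M k $ i $ j) \<longlonglongrightarrow> L $ i $ j"
proof -
  \<comment> \<open>each quadratic form decreases and is bounded below; polarization recovers the entries\<close>
  define q where "q v k = Re (cinner v (M k *v v))" for v k
  have q_conv: "convergent (q v)" for v
  proof (rule Bseq_monoseq_convergent)
    have "decseq (q v)"
      using psd_cinner_nonneg[OF dec[unfolded loewner_le_def], of _ _ v]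
      by (intro decseq_SucI) (simp add: q_def matrix_vector_mult_diff_rdistrib cinner_diff_right)
    then show "monoseq (q v)" by (rule decseq_imp_monoseq)
    show "Bseq (q v)"
      using \<open>decseq (q v)\<close> psd_cinner_nonneg[OF psd, of v]
      by (intro BseqI'[of _ "q v 0"]) (auto simp: q_def decseq_def)
  qed
  define l where "l v = lim (q v)" for v
  have l: "q v \<longlonglongrightarrow> l v" for v using q_conv by (simp add: l_def convergent_LIMSEQ_iff)
  have qc: "of_real (q w k) = cinner w (M k *v w)" for w k
    unfolding q_def by (rule cinner_hermitian_real[OF psd_hermitian[OF psd], symmetric])
  have "convergent (\<lambda>k. M k $ i $ j)" for i j
  proof (rule convergentI)
    define x y :: "complex^'n" where "x = axis i 1" and "y = axis j 1"
    have "M k $ i $ j = (1/4) * (of_real (q (y + x) k) - of_real (q (y - x) k)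
        + \<i> * of_real (q (y + \<i> *s x) k) - \<i> * of_real (q (y - \<i> *s x) k))" for k
      unfolding qc x_def y_def matrix_entry_cinner[of "M k"] by (rule cinner_polarization)
    then show "(\<lambda>k. M k $ i $ j) \<longlonglongrightarrow> (1/4) * (of_real (l (y + x)) - of_real (l (y - x))
      + \<i> * of_real (l (y + \<i> *s x)) - \<i> * of_real (l (y - \<i> *s x)))"
      by (simp only:) (intro tendsto_intros l)
  qed
  then show ?thesis
    by (intro exI[of _ "\<chi> i j. lim (\<lambda>k. M k $ i $ j)"]) (simp add: convergent_LIMSEQ_iff)
qed

section \<open>The spectral theorem and square roots\<close>

definition outer_prod :: "complex^'n \<Rightarrow> complex^'n \<Rightarrow> complex^'n^'n" where
  "outer_prod a b = (\<chi> i j. a $ i * cnj (b $ j))"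

lemma outer_prod_mult_vec: "outer_prod a b *v v = cinner b v *s a"
  by (simp add: vec_eq_iff matrix_vector_mult_def outer_prod_def cinner_def sum_distrib_left
      algebra_simps)

lemma trace_outer_prod: "trace (outer_prod a b) = cinner b a"
  by (simp add: trace_def outer_prod_def cinner_def mult.commute)

lemma matrix_mult_outer_prod: "M ** outer_prod a b = outer_prod (M *v a) b"
  by (simp add: vec_eq_iff matrix_matrix_mult_def matrix_vector_mult_def outer_prod_def
      sum_distrib_left sum_distrib_right mult_ac)

definition orthonormal_set :: "(complex^'n) set \<Rightarrow> bool" where
  "orthonormal_set B \<longleftrightarrow> (\<forall>b\<in>B. \<forall>c\<in>B. cinner b c = (if b = c then 1 else 0))"

lemma exists_nonzero_orthogonal:
  fixes B :: "(complex^'n) set"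
  assumes fin: "finite B" and orth: "orthonormal_set B" and card: "card B < CARD('n)"
  shows "\<exists>v. v \<noteq> 0 \<and> (\<forall>b\<in>B. cinner b v = 0)"
proof (rule ccontr)
  \<comment> \<open>otherwise the orthogonal projection onto the span of B is the identity, of trace CARD('n)\<close>
  assume none: "\<not> ?thesis"
  define proj where "proj e = (\<Sum>b\<in>B. cinner b e *s b)" for e :: "complex^'n"
  have "cinner c (e - proj e) = 0" if "c \<in> B" for c e
  proof -
    have "cinner c (proj e) = (\<Sum>i\<in>UNIV. \<Sum>b\<in>B. cnj (c $ i) * (cinner b e * b $ i))"
      by (simp add: proj_def cinner_def sum_distrib_left)
    also have "\<dots> = (\<Sum>b\<in>B. cinner b e * cinner c b)"
      by (subst sum.swap)
        (simp add: cinner_def sum_distrib_left mult_ac, intro sum.cong refl sum.swap)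
    also have "\<dots> = (\<Sum>b\<in>B. if b = c then cinner b e else 0)"
      using orth that unfolding orthonormal_set_def by (intro sum.cong) auto
    also have "\<dots> = cinner c e"
      using that fin by simp
    finally show ?thesis by (simp add: cinner_diff_right)
  qed
  then have proj_id: "proj e = e" for e
    using none by (metis right_minus_eq)
  have "mat 1 = (\<Sum>b\<in>B. outer_prod b b)"
  unfolding vec_eq_iff
  proof (intro allI)
    fix i j
    have "axis j (1::complex) $ i = (\<Sum>b\<in>B. cnj (b $ j) * b $ i)"
      using arg_cong[OF proj_id[of "axis j 1"], of "\<lambda>v. v $ i"]
      by (simp add: proj_def cinner_axis_right)
    then show "mat 1 $ i $ j = (\<Sum>b\<in>B. outer_prod b b) $ i $ j"
      by (simp add: outer_prod_def mat_def axis_def mult.commute)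
  qed
  then have "of_nat CARD('n) = (\<Sum>b\<in>B. cinner b b)"
    using trace_I[where 'a=complex and 'n='n] by (simp add: trace_sum trace_outer_prod)
  also have "\<dots> = of_nat (card B)" using orth unfolding orthonormal_set_def by simp
  finally show False using card by simp
qed

lemma le_0_if_le_mult_all_pos:
  fixes x c :: real
  assumes "\<And>t. 0 < t \<Longrightarrow> x \<le> t * c"
  shows "x \<le> 0"
proof (rule field_le_epsilon)
  fix e :: real
  assume "0 < e"
  define t where "t = e / (\<bar>c\<bar> + 1)"
  have "0 < t" using \<open>0 < e\<close> by (simp add: t_def add_pos_nonneg)
  have "t * c \<le> t * (\<bar>c\<bar> + 1)" using \<open>0 < t\<close> by (intro mult_left_mono) auto
  also have "\<dots> = e" by (simp add: t_def)
  finally show "x \<le> 0 + e" using assms[OF \<open>0 < t\<close>] by simp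
qed

lemma Re_cinner_hermitian_line:
  assumes "hermitian_mat H"
  shows "Re (cinner (v + t *\<^sub>R r) (H *v (v + t *\<^sub>R r)))
    = Re (cinner v (H *v v)) + 2 * t * Re (cinner r (H *v v)) + t\<^sup>2 * Re (cinner r (H *v r))"
proof -
  have "cinner v (H *v r) = cnj (cinner r (H *v v))"
    by (simp add: hermitian_cinner_swap[OF assms, symmetric] cinner_cnj)
  then have "Re (cinner v (H *v r)) = Re (cinner r (H *v v))" by simp
  then show ?thesis
    by (simp add: matrix_vector_right_distrib matrix_vector_mult_scaleR_complex cinner_add_left
        cinner_add_right cinner_scaleR_left cinner_scaleR_right power2_eq_square algebra_simps)
qed

lemma rayleigh_maximizer_eigenvector:
  fixes H :: "complex^'n^'n"
  assumes herm: "hermitian_mat H" and W: "subspace W"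
    and invariant: "\<And>x. x \<in> W \<Longrightarrow> H *v x \<in> W"
    and v: "v \<in> W" "cinner v v = 1"
    and max: "\<And>y. y \<in> W \<Longrightarrow> Re (cinner y (H *v y)) \<le> Re (cinner v (H *v v)) * (norm y)\<^sup>2"
  shows "H *v v = Re (cinner v (H *v v)) *\<^sub>R v"
proof -
  define l where "l = Re (cinner v (H *v v))"
  define r where "r = H *v v - l *\<^sub>R v"
  define n where "n = (norm r)\<^sup>2"
  have "r \<in> W" unfolding r_def by (intro subspace_diff subspace_scale W invariant v)
  have "cinner v (H *v v) = of_real l"
    unfolding l_def by (rule cinner_hermitian_real[OF herm])
  then have rv: "cinner r v = 0"
    by (simp add: r_def cinner_diff_left cinner_scaleR_left hermitian_cinner_swap[OF herm] v)
  have "cinner r (H *v v) = cinner r r"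
    using arg_cong[OF r_def, of "cinner r"] by (simp add: cinner_diff_right cinner_scaleR_right rv)
  then have rHv: "Re (cinner r (H *v v)) = n"
    by (simp only: n_def cinner_self_norm Re_complex_of_real)
  \<comment> \<open>maximality along the line v + t r, where r is orthogonal to v\<close>
  have "2 * n \<le> t * (l * n - Re (cinner r (H *v r)))" if "0 < t" for t
  proof -
    have "v + t *\<^sub>R r \<in> W" by (intro subspace_add subspace_scale W v \<open>r \<in> W\<close>)
    moreover have "(norm v)\<^sup>2 = 1"
      using v(2) unfolding cinner_self_norm by (metis of_real_eq_1_iff)
    then have "(norm (v + t *\<^sub>R r))\<^sup>2 = 1 + t\<^sup>2 * n"
      using Re_cinner_hermitian_line[OF hermitian_mat_one, of v t r] rv
      by (simp add: cinner_self_norm n_def)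
    ultimately have "l + 2 * t * n + t\<^sup>2 * Re (cinner r (H *v r)) \<le> l * (1 + t\<^sup>2 * n)"
      using max[of "v + t *\<^sub>R r"] Re_cinner_hermitian_line[OF herm, of v t r]
      by (simp add: l_def rHv)
    then have "t * (2 * n) \<le> t * (t * (l * n - Re (cinner r (H *v r))))"
      by (simp add: algebra_simps power2_eq_square)
    with that show ?thesis by simp
  qed
  then have "2 * n \<le> 0" by (rule le_0_if_le_mult_all_pos)
  then have "r = 0" by (simp add: n_def)
  then show ?thesis by (simp add: r_def l_def)
qed

lemma hermitian_eigenvector_orthogonal:
  fixes H :: "complex^'n^'n" and B :: "(complex^'n) set"
  assumes herm: "hermitian_mat H" and fin: "finite B" and orth: "orthonormal_set B"
    and eig: "\<forall>b\<in>B. \<exists>\<mu>::real. H *v b = \<mu> *\<^sub>R b" and card: "card B < CARD('n)"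
  shows "\<exists>v. cinner v v = 1 \<and> (\<forall>b\<in>B. cinner b v = 0) \<and> (\<exists>l::real. H *v v = l *\<^sub>R v)"
proof -
  define W where "W = (\<Inter>b\<in>B. {v. cinner b v = 0})"
  define f where "f v = Re (cinner v (H *v v))" for v
  have W: "subspace W"
    by (auto simp: subspace_def W_def cinner_add_right cinner_scaleR_right)
  have invariant: "H *v x \<in> W" if "x \<in> W" for x
  proof -
    have "cinner b (H *v x) = 0" if "b \<in> B" for b
      using eig that \<open>x \<in> W\<close> hermitian_cinner_swap[OF herm, of b x]
      by (auto simp: W_def cinner_scaleR_left)
    then show ?thesis by (simp add: W_def)
  qed
  have "closed W"
    unfolding W_def
    by (intro closed_INT ballI closed_Collect_eq continuous_on_cinner_right continuous_on_const)
  then have "compact (W \<inter> sphere 0 1)" by (intro closed_Int_compact compact_sphere)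
  obtain v0 where "v0 \<noteq> 0" "v0 \<in> W"
    using exists_nonzero_orthogonal[OF fin orth card] by (auto simp: W_def)
  then have "(1 / norm v0) *\<^sub>R v0 \<in> W \<inter> sphere 0 1" by (simp add: subspace_scale[OF W])
  then obtain v where v: "v \<in> W \<inter> sphere 0 1" and vmax: "\<forall>y\<in>W \<inter> sphere 0 1. f y \<le> f v"
    using continuous_attains_sup[OF \<open>compact _\<close> _ continuous_on_cinner_quadratic]
    unfolding f_def by blast
  have f_scale: "f (a *\<^sub>R y) = a\<^sup>2 * f y" for a y
    by (simp add: f_def matrix_vector_mult_scaleR_complex cinner_scaleR_left cinner_scaleR_right
        power2_eq_square)
  have "f y \<le> f v * (norm y)\<^sup>2" if "y \<in> W" for y
  proof (cases "y = 0")
    case False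
    then have "f ((1 / norm y) *\<^sub>R y) \<le> f v" using vmax \<open>y \<in> W\<close> by (simp add: subspace_scale[OF W])
    then show ?thesis using False by (simp add: f_scale power_divide divide_le_eq mult.commute)
  qed (simp add: f_def)
  then have "H *v v = f v *\<^sub>R v"
    using v unfolding f_def
    by (intro rayleigh_maximizer_eigenvector[OF herm W invariant]) (auto simp: cinner_self_norm)
  then show ?thesis using v by (intro exI[of _ v]) (auto simp: W_def cinner_self_norm)
qed

lemma hermitian_orthonormal_eigenvectors:
  fixes H :: "complex^'n^'n"
  assumes herm: "hermitian_mat H" and "k \<le> CARD('n)"
  shows "\<exists>B. finite B \<and> card B = k \<and> orthonormal_set B \<and> (\<forall>b\<in>B. \<exists>\<mu>::real. H *v b = \<mu> *\<^sub>R b)"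
  using assms(2)
proof (induction k)
  case 0
  then show ?case by (intro exI[of _ "{}"]) (auto simp: orthonormal_set_def)
next
  case (Suc k)
  then obtain B where B: "finite B" "card B = k" "orthonormal_set B"
    "\<forall>b\<in>B. \<exists>\<mu>::real. H *v b = \<mu> *\<^sub>R b"
    by auto
  obtain v where v: "cinner v v = 1" "\<forall>b\<in>B. cinner b v = 0" "\<exists>l::real. H *v v = l *\<^sub>R v"
    using hermitian_eigenvector_orthogonal[OF herm B(1,3,4)] B(2) Suc.prems by auto
  have "v \<notin> B" using v by force
  moreover have "cinner v b = 0" if "b \<in> B" for b using v(2) that cinner_cnj[of b v] by simp
  ultimately have "orthonormal_set (insert v B)"
    using B(3) v(1,2) unfolding orthonormal_set_def by auto
  then show ?case using B v \<open>v \<notin> B\<close> by (intro exI[of _ "insert v B"]) auto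
qed

definition orthonormal_basis :: "('n \<Rightarrow> complex^'n) \<Rightarrow> bool" where
  "orthonormal_basis u \<longleftrightarrow> (\<forall>k j. cinner (u k) (u j) = (if k = j then 1 else 0))"

lemma orthonormal_basis_unit: "orthonormal_basis u \<Longrightarrow> cinner (u k) (u k) = 1"
  by (simp add: orthonormal_basis_def)

lemma orthonormal_basis_resolution_of_identity:
  fixes u :: "'n \<Rightarrow> complex^'n"
  assumes "orthonormal_basis u"
  shows "(\<Sum>k\<in>UNIV. outer_prod (u k) (u k)) = mat 1"
proof -
  define U :: "complex^'n^'n" where "U = (\<chi> i k. u k $ i)"
  have "adjoint_mat U ** U = mat 1"
    using assms by (simp add: vec_eq_iff matrix_matrix_mult_def adjoint_mat_def U_def cinner_def
        orthonormal_basis_def mat_def)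
  then have "U ** adjoint_mat U = mat 1" by (simp add: matrix_left_right_inverse)
  then show ?thesis
    by (simp add: vec_eq_iff matrix_matrix_mult_def adjoint_mat_def U_def outer_prod_def)
qed

lemma hermitian_spectral:
  fixes H :: "complex^'n^'n"
  assumes herm: "hermitian_mat H"
  obtains u :: "'n \<Rightarrow> complex^'n" and l :: "'n \<Rightarrow> real"
  where "orthonormal_basis u" "\<And>k. H *v u k = l k *\<^sub>R u k"
proof -
  obtain B where B: "finite B" "card B = CARD('n)" "orthonormal_set B"
      "\<forall>b\<in>B. \<exists>\<mu>::real. H *v b = \<mu> *\<^sub>R b"
    using hermitian_orthonormal_eigenvectors[OF herm order.refl] by auto
  obtain g where g: "bij_betw g (UNIV::'n set) B"
    using finite_same_card_bij[of "UNIV::'n set" B] B(1,2) by auto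
  then have "orthonormal_basis g"
    using B(3) unfolding orthonormal_basis_def orthonormal_set_def bij_betw_def inj_on_def by auto
  moreover have "\<exists>\<mu>::real. H *v g k = \<mu> *\<^sub>R g k" for k
    using B(4) g by (auto simp: bij_betw_def)
  ultimately show ?thesis using that by metis
qed

lemma matrix_eq_on_orthonormal_basis:
  fixes M N :: "complex^'n^'n"
  assumes u: "orthonormal_basis u" and eq: "\<And>k. M *v u k = N *v u k"
  shows "M = N"
proof -
  have expand: "A = (\<Sum>k\<in>UNIV. outer_prod (A *v u k) (u k))" for A :: "complex^'n^'n"
    using arg_cong[OF orthonormal_basis_resolution_of_identity[OF u], of "\<lambda>B. A ** B"]
    by (simp add: matrix_mult_sum_right matrix_mult_outer_prod)
  show ?thesis by (subst (1 2) expand) (simp add: eq)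
qed

definition onb_diag :: "('n \<Rightarrow> complex^'n) \<Rightarrow> ('n \<Rightarrow> real) \<Rightarrow> complex^'n^'n" where
  "onb_diag u f = (\<Sum>k\<in>UNIV. outer_prod (of_real (f k) *s u k) (u k))"

lemma onb_diag_mult_vec:
  assumes "orthonormal_basis u"
  shows "onb_diag u f *v u j = f j *\<^sub>R u j"
proof -
  have "onb_diag u f *v u j = (\<Sum>k\<in>UNIV. cinner (u k) (u j) *s (of_real (f k) *s u k))"
    by (simp add: onb_diag_def sum_matrix_vector_mult outer_prod_mult_vec)
  also have "\<dots> = (\<Sum>k\<in>UNIV. if k = j then of_real (f j) *s u j else 0)"
    using assms unfolding orthonormal_basis_def by (intro sum.cong) auto
  also have "\<dots> = f j *\<^sub>R u j"
    by (simp add: vec_eq_iff scaleR_conv_of_real[where 'a=complex])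
  finally show ?thesis .
qed

lemma onb_diag_eigenbasis:
  assumes u: "orthonormal_basis u" and eig: "\<And>k. H *v u k = l k *\<^sub>R u k"
  shows "H = onb_diag u l"
  by (rule matrix_eq_on_orthonormal_basis[OF u]) (simp add: onb_diag_mult_vec[OF u] eig)

lemma onb_diag_mult:
  assumes u: "orthonormal_basis u"
  shows "onb_diag u f ** onb_diag u g = onb_diag u (\<lambda>k. f k * g k)"
  by (rule matrix_eq_on_orthonormal_basis[OF u])
    (simp add: onb_diag_mult_vec[OF u] matrix_vector_mult_scaleR_complex
      flip: matrix_vector_mul_assoc)

lemma onb_diag_one:
  assumes u: "orthonormal_basis u"
  shows "onb_diag u (\<lambda>k. 1) = mat 1"
  by (rule matrix_eq_on_orthonormal_basis[OF u]) (simp add: onb_diag_mult_vec[OF u])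

lemma hermitian_onb_diag: "hermitian_mat (onb_diag u f)"
  by (simp add: hermitian_mat_def adjoint_mat_def onb_diag_def outer_prod_def vec_eq_iff mult_ac)

lemma psd_onb_diag:
  assumes "\<And>k. 0 \<le> f k"
  shows "psd (onb_diag u f)"
proof -
  have "cinner v (onb_diag u f *v v) = (\<Sum>k\<in>UNIV. of_real (f k * (cmod (cinner v (u k)))\<^sup>2))" for v
  proof -
    have "cinner (u k) v * cinner v (u k) = of_real ((cmod (cinner v (u k)))\<^sup>2)" for k
      by (simp only: complex_norm_square cinner_cnj[of v "u k", symmetric] mult.commute)
    then show ?thesis
      by (simp add: onb_diag_def sum_matrix_vector_mult outer_prod_mult_vec cinner_sum_right
          cinner_scale_right mult_ac)
  qed
  then show ?thesis
    using assms by (simp add: psd_iff_cinner hermitian_onb_diag sum_nonneg)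
qed

lemma hermitian_not_psd_negative_eigenvector:
  fixes H :: "complex^'n^'n"
  assumes "hermitian_mat H" "\<not> psd H"
  obtains v l where "cinner v v = 1" "H *v v = l *\<^sub>R v" "l < 0"
proof -
  obtain u l where u: "orthonormal_basis u" and eig: "\<And>k. H *v u k = l k *\<^sub>R u k"
    using hermitian_spectral[OF assms(1)] by blast
  have "\<not> (\<forall>k. 0 \<le> l k)"
    using psd_onb_diag[of l u] onb_diag_eigenbasis[OF u eig] assms(2) by auto
  then show ?thesis using that orthonormal_basis_unit[OF u] eig by (meson not_le)
qed

lemma psd_sqrt_exists:
  assumes A: "psd A"
  shows "\<exists>R. psd R \<and> R ** R = A"
proof -
  obtain u l where u: "orthonormal_basis u" and eig: "\<And>k. A *v u k = l k *\<^sub>R u k"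
    using hermitian_spectral[OF psd_hermitian[OF A]] by blast
  have l: "0 \<le> l k" for k
    by (rule psd_eigenvalue_nonneg[OF A orthonormal_basis_unit[OF u] eig])
  define R where "R = onb_diag u (\<lambda>k. sqrt (l k))"
  have "psd R" unfolding R_def by (rule psd_onb_diag) (simp add: l)
  moreover have "R ** R = A"
    using l unfolding R_def onb_diag_mult[OF u] onb_diag_eigenbasis[OF u eig] by simp
  ultimately show ?thesis by blast
qed

lemma psd_sqrt_unique:
  fixes B C :: "complex^'n^'n"
  assumes B: "psd B" and C: "psd C" and eq: "B ** B = C ** C"
  shows "B = C"
proof -
  obtain u c where u: "orthonormal_basis u" and eig: "\<And>k. C *v u k = c k *\<^sub>R u k"
    using hermitian_spectral[OF psd_hermitian[OF C]] by blast
  have "B *v u k = C *v u k" for k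
  proof -
    define x a where "x = u k" and "a = c k"
    have "0 \<le> a"
      unfolding x_def a_def by (rule psd_eigenvalue_nonneg[OF C orthonormal_basis_unit[OF u] eig])
    have Cx: "C *v x = a *\<^sub>R x" by (simp add: x_def a_def eig)
    have "B *v (B *v x) = C *v (C *v x)"
      by (simp add: matrix_vector_mul_assoc eq)
    then have BBx: "B *v (B *v x) = (a * a) *\<^sub>R x"
      by (simp add: Cx matrix_vector_mult_scaleR_complex)
    show ?thesis
    proof (cases "a = 0")
      case True
      have "cinner (B *v x) (B *v x) = cinner x (B *v (B *v x))"
        by (rule hermitian_cinner_swap[OF psd_hermitian[OF B]])
      then have "B *v x = 0" using True by (simp add: BBx)
      then show ?thesis using Cx True by (simp add: x_def)
    next
      case False
      \<comment> \<open>w is an eigenvector of B for the eigenvalue -a < 0, so it must vanish\<close>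
      define w where "w = B *v x - a *\<^sub>R x"
      have "B *v w = (- a) *\<^sub>R w"
        by (simp add: w_def matrix_vector_mult_diff_distrib matrix_vector_mult_scaleR_complex BBx
            algebra_simps)
      then have "0 \<le> - a * (norm w)\<^sup>2"
        using psd_cinner_nonneg[OF B, of w]
        by (simp add: cinner_minus_right cinner_scaleR_right cinner_self_norm)
      then have "w = 0" using False \<open>0 \<le> a\<close> by (simp add: mult_le_0_iff)
      then show ?thesis using Cx by (simp add: w_def x_def)
    qed
  qed
  then show ?thesis by (rule matrix_eq_on_orthonormal_basis[OF u])
qed

lemma psd_mat_sqrt: "psd A \<Longrightarrow> psd (mat_sqrt A)"
  and mat_sqrt_mult_self: "psd A \<Longrightarrow> mat_sqrt A ** mat_sqrt A = A"
proof -
  assume "psd A"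
  then have "\<exists>!R. psd R \<and> R ** R = A"
    using psd_sqrt_exists psd_sqrt_unique by metis
  then have "psd (mat_sqrt A) \<and> mat_sqrt A ** mat_sqrt A = A"
    unfolding mat_sqrt_def by (rule theI')
  then show "psd (mat_sqrt A)" "mat_sqrt A ** mat_sqrt A = A" by auto
qed

lemma psd_shift_invertible_sqrt:
  assumes P: "psd P" and e: "0 < e"
  obtains S T where "hermitian_mat S" "hermitian_mat T" "S ** S = P + mat (of_real e)"
    "S ** T = mat 1" "T ** S = mat 1"
proof -
  obtain u l where u: "orthonormal_basis u" and eig: "\<And>k. P *v u k = l k *\<^sub>R u k"
    using hermitian_spectral[OF psd_hermitian[OF P]] by blast
  have pos: "0 < l k + e" for k
    using psd_eigenvalue_nonneg[OF P orthonormal_basis_unit[OF u] eig] e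
    by (simp add: add_nonneg_pos)
  have "(P + mat (of_real e)) *v u k = (l k + e) *\<^sub>R u k" for k
    by (simp add: matrix_vector_mult_add_rdistrib eig mat_matrix_vector_mult scale_of_real_eq_scaleR
        scaleR_add_left)
  then have Pe: "P + mat (of_real e) = onb_diag u (\<lambda>k. l k + e)"
    by (rule onb_diag_eigenbasis[OF u])
  define S T where "S = onb_diag u (\<lambda>k. sqrt (l k + e))"
    and "T = onb_diag u (\<lambda>k. 1 / sqrt (l k + e))"
  show ?thesis
  proof (rule that)
    show "hermitian_mat S" "hermitian_mat T" unfolding S_def T_def by (rule hermitian_onb_diag)+
    show "S ** S = P + mat (of_real e)"
      using pos unfolding S_def Pe onb_diag_mult[OF u] by (simp add: less_imp_le)
    have "l k + e \<noteq> 0" for k using pos[of k] by simp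
    then show "S ** T = mat 1" "T ** S = mat 1"
      unfolding S_def T_def onb_diag_mult[OF u] onb_diag_one[OF u, symmetric] by simp_all
  qed
qed

lemma loewner_le_cancel_square:
  fixes Z W :: "complex^'n^'n"
  assumes Z: "psd Z" and W: "psd W" and sq: "loewner_le (Z ** Z) (W ** W)"
  shows "loewner_le Z W"
proof (rule ccontr)
  \<comment> \<open>along an eigenvector v of W - Z for an eigenvalue l < 0,
    the form of W ** W - Z ** Z is l (2 <v, Z v> + l) < 0\<close>
  have hW: "hermitian_mat W" and hZ: "hermitian_mat Z" using W Z by (simp_all add: psd_hermitian)
  assume "\<not> loewner_le Z W"
  then obtain v l where v: "cinner v v = 1" "(W - Z) *v v = l *\<^sub>R v" "l < 0"
    using hermitian_not_psd_negative_eigenvector[OF hermitian_mat_diff[OF hW hZ]]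
    unfolding loewner_le_def by blast
  have Wv: "W *v v = Z *v v + l *\<^sub>R v"
    using v(2) by (simp add: matrix_vector_mult_diff_rdistrib algebra_simps)
  define z where "z = Re (cinner v (Z *v v))"
  have Zv: "cinner v (Z *v v) = of_real z" "cinner (Z *v v) v = of_real z"
    using cinner_hermitian_real[OF hZ, of v] hermitian_cinner_swap[OF hZ, of v v]
    by (simp_all add: z_def)
  have "0 \<le> Re (cinner v (W *v v))" by (rule psd_cinner_nonneg[OF W])
  then have "0 \<le> z + l" by (simp add: Wv cinner_add_right cinner_scaleR_right v(1) Zv)
  have "cinner v ((W ** W - Z ** Z) *v v) = cinner (W *v v) (W *v v) - cinner (Z *v v) (Z *v v)"
    by (simp add: matrix_vector_mult_diff_rdistrib cinner_diff_right hermitian_cinner_swap[OF hW]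
        hermitian_cinner_swap[OF hZ] flip: matrix_vector_mul_assoc)
  also have "\<dots> = of_real (l * (2 * z + l))"
    by (simp add: Wv cinner_add_left cinner_add_right cinner_scaleR_left cinner_scaleR_right v(1) Zv
        algebra_simps)
  finally have "0 \<le> l * (2 * z + l)"
    using psd_cinner_nonneg[OF sq[unfolded loewner_le_def], of v] by simp
  moreover have "l * (2 * z + l) < 0"
    using \<open>0 \<le> z + l\<close> \<open>l < 0\<close> by (intro mult_neg_pos) linarith+
  ultimately show False by linarith
qed

section \<open>Block matrices\<close>

definition block_form :: "complex^'d^'d \<Rightarrow> complex^'d^'d \<Rightarrow> complex^'d^'d \<Rightarrow> complex^'d^'d
    \<Rightarrow> complex^'d \<Rightarrow> complex^'d \<Rightarrow> complex"
  where "block_form P X Y Q u w =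
    cinner u (P *v u) + cinner u (X *v w) + cinner w (Y *v u) + cinner w (Q *v w)"

lemma sum_UNIV_Plus:
  "(\<Sum>i\<in>UNIV. f i) = (\<Sum>a\<in>UNIV. f (Inl a)) + (\<Sum>b\<in>UNIV. f (Inr b :: 'a::finite + 'b::finite))"
  using sum.Plus[of "UNIV::'a set" "UNIV::'b set" f] by (simp add: comp_def)

lemma cinner_block2:
  "cinner v (block2 P X Y Q *v v) = block_form P X Y Q (\<chi> a. v $ Inl a) (\<chi> a. v $ Inr a)"
  unfolding block_form_def cinner_def matrix_vector_mult_def block2_def
  by (simp add: sum_UNIV_Plus sum_distrib_left sum.distrib algebra_simps)

lemma psd_block2_iff:
  assumes "hermitian_mat P" "hermitian_mat Q" "hermitian_mat X"
  shows "psd (block2 P X X Q) \<longleftrightarrow> (\<forall>u w. 0 \<le> Re (block_form P X X Q u w))"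
proof -
  have "hermitian_mat (block2 P X X Q)"
    using assms
    by (auto simp: hermitian_mat_def adjoint_mat_def block2_def vec_eq_iff split: sum.splits)
  moreover have "\<exists>v. (\<chi> a. v $ Inl a) = u \<and> (\<chi> a. v $ Inr a) = w" for u w :: "complex^'d"
    by (intro exI[of _ "\<chi> i. case i of Inl a \<Rightarrow> u $ a | Inr b \<Rightarrow> w $ b"]) (simp add: vec_eq_iff)
  ultimately show ?thesis unfolding psd_iff_cinner cinner_block2 by metis
qed

lemma block_form_congruence:
  assumes "hermitian_mat S"
  shows "block_form (S ** P ** S) (S ** X ** S) (S ** Y ** S) (S ** Q ** S) u w
    = block_form P X Y Q (S *v u) (S *v w)"
  unfolding block_form_def
  by (simp add: hermitian_cinner_swap[OF assms] flip: matrix_vector_mul_assoc)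

lemma psd_block2_congruence:
  assumes S: "hermitian_mat S" and herm: "hermitian_mat P" "hermitian_mat Q" "hermitian_mat X"
    and block: "psd (block2 P X X Q)"
  shows "psd (block2 (S ** P ** S) (S ** X ** S) (S ** X ** S) (S ** Q ** S))"
  using block unfolding psd_block2_iff[OF herm] psd_block2_iff[OF hermitian_congruence[OF S herm(1)]
    hermitian_congruence[OF S herm(2)] hermitian_congruence[OF S herm(3)]]
  by (simp add: block_form_congruence[OF S])

lemma psd_block2_swap:
  assumes herm: "hermitian_mat P" "hermitian_mat Q" "hermitian_mat X"
    and block: "psd (block2 P X X Q)"
  shows "psd (block2 Q X X P)"
proof -
  have "block_form Q X X P u w = block_form P X X Q w u" for u w
    by (simp add: block_form_def algebra_simps)
  then show ?thesis
    using block unfolding psd_block2_iff[OF herm] psd_block2_iff[OF herm(2,1,3)] by simp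
qed

lemma psd_block2_shift_mono:
  assumes herm: "hermitian_mat P" "hermitian_mat Q" "hermitian_mat Y" and "e \<le> e'"
    and block: "psd (block2 (P + mat (of_real e)) Y Y (Q + mat (of_real e)))"
  shows "psd (block2 (P + mat (of_real e')) Y Y (Q + mat (of_real e')))"
proof -
  have shift: "block_form (P + mat (of_real c)) Y Y (Q + mat (of_real c)) u w
      = block_form P Y Y Q u w + of_real (c * ((norm u)\<^sup>2 + (norm w)\<^sup>2))" for c u w
    by (simp add: block_form_def matrix_vector_mult_add_rdistrib mat_matrix_vector_mult
        cinner_add_right cinner_scale_right cinner_self_norm algebra_simps)
  have herm_shift: "hermitian_mat (P + mat (of_real c))" "hermitian_mat (Q + mat (of_real c))" for c
    using herm by (simp_all add: hermitian_mat_add hermitian_mat_of_real)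
  show ?thesis
    unfolding psd_block2_iff[OF herm_shift herm(3)] shift
  proof (intro allI)
    fix u w
    have "0 \<le> Re (block_form P Y Y Q u w) + e * ((norm u)\<^sup>2 + (norm w)\<^sup>2)"
      using block unfolding psd_block2_iff[OF herm_shift herm(3)] shift by simp
    moreover have "e * ((norm u)\<^sup>2 + (norm w)\<^sup>2) \<le> e' * ((norm u)\<^sup>2 + (norm w)\<^sup>2)"
      using \<open>e \<le> e'\<close> by (simp add: mult_right_mono)
    ultimately show "0 \<le> Re (block_form P Y Y Q u w + of_real (e' * ((norm u)\<^sup>2 + (norm w)\<^sup>2)))"
      by simp
  qed
qed

lemma block_form_identity_square:
  assumes "hermitian_mat R"
  shows "block_form (mat 1) R R (R ** R) u w = cinner (u + R *v w) (u + R *v w)"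
  using hermitian_cinner_swap[OF assms, of w u] hermitian_cinner_swap[OF assms, of w "R *v w"]
  by (simp add: block_form_def cinner_add_left cinner_add_right algebra_simps
      flip: matrix_vector_mul_assoc)

lemma block_form_identity_schur:
  assumes "hermitian_mat Z"
  shows "block_form (mat 1) Z Z C (- (Z *v w)) w = cinner w ((C - Z ** Z) *v w)"
  using hermitian_cinner_swap[OF assms, of w "Z *v w"]
  by (simp add: block_form_def matrix_vector_mult_minus cinner_minus_left cinner_minus_right
      matrix_vector_mult_diff_rdistrib cinner_diff_right flip: matrix_vector_mul_assoc)

section \<open>The geometric mean\<close>

definition is_geo_mean :: "complex^'d^'d \<Rightarrow> complex^'d^'d \<Rightarrow> complex^'d^'d \<Rightarrow> bool" where
  "is_geo_mean P Q M \<longleftrightarrow> psd M \<and> psd (block2 P M M Q) \<and>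
     (\<forall>Y. psd Y \<and> psd (block2 P Y Y Q) \<longrightarrow> loewner_le Y M)"

lemma geo_mean_eq:
  assumes M: "is_geo_mean P Q M"
  shows "geo_mean P Q = M"
proof -
  have "X = M" if "is_geo_mean P Q X" for X
    using M that unfolding is_geo_mean_def by (blast intro: loewner_le_antisym)
  then have "(THE X. is_geo_mean P Q X) = M" using M by blast
  then show ?thesis by (simp add: geo_mean_def is_geo_mean_def)
qed

lemma is_geo_mean_identity:
  assumes C: "psd C"
  shows "is_geo_mean (mat 1) C (mat_sqrt C)"
proof -
  define R where "R = mat_sqrt C"
  have R: "psd R" "R ** R = C"
    unfolding R_def using psd_mat_sqrt[OF C] mat_sqrt_mult_self[OF C] by auto
  have hR: "hermitian_mat R" and hC: "hermitian_mat C" using R C by (simp_all add: psd_hermitian)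
  have "psd (block2 (mat 1) R R C)"
    unfolding psd_block2_iff[OF hermitian_mat_one hC hR]
    using block_form_identity_square[OF hR] R(2) by (simp add: Re_cinner_self_nonneg)
  moreover have "loewner_le Y R" if Y: "psd Y" and block: "psd (block2 (mat 1) Y Y C)" for Y
  proof -
    have hY: "hermitian_mat Y" using Y by (rule psd_hermitian)
    have "0 \<le> Re (cinner w ((C - Y ** Y) *v w))" for w
      using block unfolding psd_block2_iff[OF hermitian_mat_one hC hY]
      by (metis block_form_identity_schur[OF hY])
    then have "loewner_le (Y ** Y) (R ** R)"
      unfolding loewner_le_def R(2) psd_iff_cinner
      using hermitian_mat_diff[OF hC hermitian_mat_square[OF hY]] by blast
    then show ?thesis by (rule loewner_le_cancel_square[OF Y R(1)])
  qed
  ultimately show ?thesis using R(1) unfolding is_geo_mean_def R_def by blast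
qed

lemma is_geo_mean_congruence:
  assumes S: "hermitian_mat S" and T: "hermitian_mat T"
    and ST: "S ** T = mat 1" and TS: "T ** S = mat 1"
    and herm: "hermitian_mat P" "hermitian_mat Q"
    and M: "is_geo_mean (T ** P ** T) (T ** Q ** T) M"
  shows "is_geo_mean P Q (S ** M ** S)"
proof -
  have undo: "S ** (T ** Z ** T) ** S = Z" for Z
    by (metis ST TS matrix_mul_assoc matrix_mul_lid matrix_mul_rid)
  have herm': "hermitian_mat (T ** P ** T)" "hermitian_mat (T ** Q ** T)"
    using hermitian_congruence[OF T] herm by auto
  have hM: "hermitian_mat M" using M by (simp add: is_geo_mean_def psd_hermitian)
  have "psd (S ** M ** S)" using M by (simp add: is_geo_mean_def psd_congruence[OF S])
  moreover have "psd (block2 P (S ** M ** S) (S ** M ** S) Q)"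
    using psd_block2_congruence[OF S herm' hM] M by (simp add: is_geo_mean_def undo)
  moreover have "loewner_le Y (S ** M ** S)" if Y: "psd Y" and block: "psd (block2 P Y Y Q)" for Y
  proof -
    have hY: "hermitian_mat Y" using Y by (rule psd_hermitian)
    have "loewner_le (T ** Y ** T) M"
      using M psd_congruence[OF T Y] psd_block2_congruence[OF T herm hY block]
      unfolding is_geo_mean_def by blast
    then have "psd (S ** (M - T ** Y ** T) ** S)"
      unfolding loewner_le_def by (rule psd_congruence[OF S])
    then show ?thesis
      unfolding loewner_le_def matrix_diff_ldistrib matrix_diff_rdistrib undo .
  qed
  ultimately show ?thesis unfolding is_geo_mean_def by blast
qed

lemma is_geo_mean_shift_exists:
  assumes P: "psd P" and Q: "psd Q" and e: "0 < e"
  shows "\<exists>M. is_geo_mean (P + mat (of_real e)) (Q + mat (of_real e)) M"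
proof -
  obtain S T where S: "hermitian_mat S" and T: "hermitian_mat T"
    and SS: "S ** S = P + mat (of_real e)"
    and ST: "S ** T = mat 1" and TS: "T ** S = mat 1"
    using psd_shift_invertible_sqrt[OF P e] .
  have Pe: "psd (P + mat (of_real e))" and Qe: "psd (Q + mat (of_real e))"
    using psd_shift[OF P] psd_shift[OF Q] e by simp_all
  have "T ** (P + mat (of_real e)) ** T = mat 1"
    unfolding SS[symmetric] by (metis ST TS matrix_mul_assoc matrix_mul_lid)
  then have "is_geo_mean (T ** (P + mat (of_real e)) ** T) (T ** (Q + mat (of_real e)) ** T)
      (mat_sqrt (T ** (Q + mat (of_real e)) ** T))"
    using is_geo_mean_identity[OF psd_congruence[OF T Qe]] by simp
  from is_geo_mean_congruence[OF S T ST TS psd_hermitian[OF Pe] psd_hermitian[OF Qe] this]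
  show ?thesis by blast
qed

lemma tendsto_add_mat_entry:
  fixes P :: "complex^'n^'n"
  assumes "e \<longlonglongrightarrow> 0"
  shows "(\<lambda>k. P $ i $ j + mat (of_real (e k)) $ i $ j) \<longlonglongrightarrow> P $ i $ j"
  using tendsto_add[OF tendsto_const tendsto_of_real[OF assms], of "P $ i $ j"]
  by (cases "i = j") (auto simp: mat_def)

lemma is_geo_mean_shift_antimono:
  assumes hP: "hermitian_mat P" and hQ: "hermitian_mat Q" and "c \<le> e"
    and Mc: "is_geo_mean (P + mat (of_real c)) (Q + mat (of_real c)) Mc"
    and Me: "is_geo_mean (P + mat (of_real e)) (Q + mat (of_real e)) Me"
  shows "loewner_le Mc Me"
proof -
  have "psd Mc" and "psd (block2 (P + mat (of_real c)) Mc Mc (Q + mat (of_real c)))"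
    using Mc by (simp_all add: is_geo_mean_def)
  then have "psd (block2 (P + mat (of_real e)) Mc Mc (Q + mat (of_real e)))"
    using psd_block2_shift_mono[OF hP hQ psd_hermitian \<open>c \<le> e\<close>] by blast
  then show ?thesis using Me \<open>psd Mc\<close> by (simp add: is_geo_mean_def)
qed

lemma is_geo_mean_shift_limit:
  assumes hP: "hermitian_mat P" and hQ: "hermitian_mat Q"
    and e_pos: "\<And>k. 0 < e k" and e_lim: "e \<longlonglongrightarrow> 0"
    and M: "\<And>k. is_geo_mean (P + mat (of_real (e k))) (Q + mat (of_real (e k))) (M k)"
    and L: "\<And>i j. (\<lambda>k. M k $ i $ j) \<longlonglongrightarrow> L $ i $ j"
  shows "is_geo_mean P Q L"
proof -
  have "psd L" using M by (intro psd_limit[OF _ L]) (simp add: is_geo_mean_def)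
  moreover have "psd (block2 P L L Q)"
  proof (rule psd_limit)
    show "psd (block2 (P + mat (of_real (e k))) (M k) (M k) (Q + mat (of_real (e k))))" for k
      using M by (simp add: is_geo_mean_def)
    show "(\<lambda>k. block2 (P + mat (of_real (e k))) (M k) (M k) (Q + mat (of_real (e k))) $ i $ j)
        \<longlonglongrightarrow> block2 P L L Q $ i $ j" for i j
      unfolding block2_def by (cases i; cases j) (simp_all add: L tendsto_add_mat_entry[OF e_lim])
  qed
  moreover have "loewner_le Y L" if Y: "psd Y" and block: "psd (block2 P Y Y Q)" for Y
    unfolding loewner_le_def
  proof (rule psd_limit)
    have "psd (block2 (P + mat (of_real (e k))) Y Y (Q + mat (of_real (e k))))" for k
      using psd_block2_shift_mono[OF hP hQ psd_hermitian[OF Y], of 0 "e k"] block e_pos[of k]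
      by simp
    then show "psd (M k - Y)" for k
      using M Y by (simp add: is_geo_mean_def loewner_le_def)
    show "(\<lambda>k. (M k - Y) $ i $ j) \<longlonglongrightarrow> (L - Y) $ i $ j" for i j
      by (simp add: tendsto_diff L)
  qed
  ultimately show ?thesis unfolding is_geo_mean_def by blast
qed

lemma is_geo_mean_exists:
  assumes P: "psd P" and Q: "psd Q"
  shows "\<exists>M. is_geo_mean P Q M"
proof -
  have hP: "hermitian_mat P" and hQ: "hermitian_mat Q" using P Q by (simp_all add: psd_hermitian)
  define e where "e k = 1 / real (Suc k)" for k
  have e_pos: "0 < e k" for k by (simp add: e_def)
  have e_lim: "e \<longlonglongrightarrow> 0"
    unfolding e_def by (rule LIMSEQ_inverse_real_of_nat[unfolded inverse_eq_divide])
  have e_mono: "k \<le> m \<Longrightarrow> e m \<le> e k" for k m by (simp add: e_def frac_le)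
  define M where "M k = geo_mean (P + mat (of_real (e k))) (Q + mat (of_real (e k)))" for k
  have M: "is_geo_mean (P + mat (of_real (e k))) (Q + mat (of_real (e k))) (M k)" for k
    using is_geo_mean_shift_exists[OF P Q e_pos] by (metis M_def geo_mean_eq)
  have "psd (M k)" for k using M by (simp add: is_geo_mean_def)
  moreover have "loewner_le (M m) (M k)" if "k \<le> m" for k m
    by (rule is_geo_mean_shift_antimono[OF hP hQ e_mono[OF that] M M])
  ultimately obtain L where "\<And>i j. (\<lambda>k. M k $ i $ j) \<longlonglongrightarrow> L $ i $ j"
    using decreasing_psd_converges[of M] by blast
  then show ?thesis using is_geo_mean_shift_limit[OF hP hQ e_pos e_lim M] by blast
qed

lemma is_geo_mean_geo_mean:
  assumes "psd P" "psd Q"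
  shows "is_geo_mean P Q (geo_mean P Q)"
proof -
  obtain M where "is_geo_mean P Q M" using is_geo_mean_exists[OF assms] by blast
  then show ?thesis by (simp add: geo_mean_eq)
qed

definition mat_cnj :: "complex^'n^'m \<Rightarrow> complex^'n^'m" where
  "mat_cnj A = (\<chi> i j. cnj (A $ i $ j))"

lemma mat_cnj_mat_cnj [simp]: "mat_cnj (mat_cnj A) = A"
  by (simp add: mat_cnj_def vec_eq_iff)

lemma mat_cnj_diff: "mat_cnj (A - B) = mat_cnj A - mat_cnj B"
  by (simp add: mat_cnj_def vec_eq_iff)

lemma mat_cnj_block2:
  "mat_cnj (block2 P X Y Q) = block2 (mat_cnj P) (mat_cnj X) (mat_cnj Y) (mat_cnj Q)"
  by (simp add: mat_cnj_def block2_def vec_eq_iff split: sum.splits)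

lemma real_mat_iff_mat_cnj: "real_mat A \<longleftrightarrow> mat_cnj A = A"
  by (simp add: real_mat_def mat_cnj_def vec_eq_iff complex_eq_iff)

lemma transpose_hermitian: "hermitian_mat J \<Longrightarrow> transpose J = mat_cnj J"
  by (simp add: hermitian_mat_def adjoint_mat_def mat_cnj_def transpose_def vec_eq_iff)

lemma psd_mat_cnj:
  assumes "psd A"
  shows "psd (mat_cnj A)"
proof -
  have "cinner v (mat_cnj A *v v) = cnj (cinner (\<chi> i. cnj (v $ i)) (A *v (\<chi> i. cnj (v $ i))))" for v
    by (simp add: cinner_def mat_cnj_def matrix_vector_mult_def)
  moreover have "hermitian_mat (mat_cnj A)"
    using psd_hermitian[OF assms]
    by (simp add: hermitian_mat_def adjoint_mat_def mat_cnj_def vec_eq_iff)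
  ultimately show ?thesis
    using psd_cinner_nonneg[OF assms] by (simp add: psd_iff_cinner)
qed

lemma psd_transpose: "psd J \<Longrightarrow> psd (transpose J)"
  by (simp add: transpose_hermitian psd_hermitian psd_mat_cnj)

lemma loewner_le_mat_cnj: "loewner_le A B \<Longrightarrow> loewner_le (mat_cnj A) (mat_cnj B)"
  by (metis loewner_le_def mat_cnj_diff psd_mat_cnj)

lemma is_geo_mean_mat_cnj:
  assumes M: "is_geo_mean P Q M"
  shows "is_geo_mean (mat_cnj P) (mat_cnj Q) (mat_cnj M)"
  unfolding is_geo_mean_def
proof (intro conjI allI impI)
  show "psd (mat_cnj M)" "psd (block2 (mat_cnj P) (mat_cnj M) (mat_cnj M) (mat_cnj Q))"
    using M by (simp_all add: is_geo_mean_def psd_mat_cnj flip: mat_cnj_block2)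
  fix Y
  assume "psd Y \<and> psd (block2 (mat_cnj P) Y Y (mat_cnj Q))"
  then have "loewner_le (mat_cnj Y) M"
    using M psd_mat_cnj[of Y] psd_mat_cnj[of "block2 (mat_cnj P) Y Y (mat_cnj Q)"]
    by (simp add: is_geo_mean_def mat_cnj_block2)
  then show "loewner_le Y (mat_cnj M)"
    using loewner_le_mat_cnj by fastforce
qed

lemma is_geo_mean_swap:
  assumes P: "hermitian_mat P" and Q: "hermitian_mat Q" and M: "is_geo_mean P Q M"
  shows "is_geo_mean Q P M"
proof -
  have "psd (block2 Q Y Y P) \<longleftrightarrow> psd (block2 P Y Y Q)" if "psd Y" for Y
    using psd_block2_swap[OF P Q psd_hermitian[OF that]]
      psd_block2_swap[OF Q P psd_hermitian[OF that]]
    by blast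
  then show ?thesis using M unfolding is_geo_mean_def by blast
qed

lemma real_mat_geo_mean_transpose:
  assumes J: "psd J"
  shows "real_mat (J # transpose J)"
proof -
  have hJ: "hermitian_mat J" using J by (rule psd_hermitian)
  have JT: "transpose J = mat_cnj J" by (rule transpose_hermitian[OF hJ])
  have hJT: "hermitian_mat (mat_cnj J)" using psd_hermitian[OF psd_mat_cnj[OF J]] .
  define G where "G = J # mat_cnj J"
  have "is_geo_mean J (mat_cnj J) G"
    unfolding G_def by (rule is_geo_mean_geo_mean[OF J psd_mat_cnj[OF J]])
  then have "is_geo_mean (mat_cnj J) J (mat_cnj G)"
    using is_geo_mean_mat_cnj by fastforce
  then have "is_geo_mean J (mat_cnj J) (mat_cnj G)"
    by (rule is_geo_mean_swap[OF hJT hJ])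
  then have "mat_cnj G = G" unfolding G_def by (rule geo_mean_eq[symmetric])
  then show ?thesis unfolding JT G_def real_mat_iff_mat_cnj .
qed

section \<open>Correlation matrices\<close>

definition scale_mat :: "complex \<Rightarrow> complex^'n^'m \<Rightarrow> complex^'n^'m" where
  "scale_mat c A = (\<chi> i j. c * A $ i $ j)"

lemma scale_mat_mult_left: "scale_mat c A ** B = scale_mat c (A ** B)"
  and scale_mat_mult_right: "A ** scale_mat c B = scale_mat c (A ** B)"
  by (simp_all add: scale_mat_def matrix_matrix_mult_def vec_eq_iff sum_distrib_left mult_ac)

lemma trace_scale_mat: "trace (scale_mat c A) = c * trace (A :: complex^'n^'n)"
  by (simp add: scale_mat_def trace_def sum_distrib_left)

definition lincomb :: "complex^'d \<Rightarrow> ('d \<Rightarrow> complex^'n^'n) \<Rightarrow> complex^'n^'n" where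
  "lincomb c X = (\<Sum>j\<in>UNIV. scale_mat (c $ j) (X j))"

lemma adjoint_lincomb:
  "(\<And>j. hermitian_mat (X j)) \<Longrightarrow> adjoint_mat (lincomb c X) = lincomb (\<chi> j. cnj (c $ j)) X"
  unfolding lincomb_def hermitian_mat_def adjoint_mat_def
  by (simp add: vec_eq_iff scale_mat_def)

lemma trace_lincomb_bilinear:
  "trace (P1 ** lincomb a X ** P2 ** lincomb b X)
    = (\<Sum>j\<in>UNIV. \<Sum>i\<in>UNIV. a $ j * b $ i * trace (P1 ** X j ** P2 ** X i))"
  unfolding lincomb_def
  by (simp add: matrix_mult_sum_right matrix_mult_sum_left scale_mat_mult_left scale_mat_mult_right
      trace_sum trace_scale_mat sum_distrib_left mult.assoc)
    (subst sum.swap, simp add: mult_ac)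

\<comment> \<open>J is correlation_mat \<rho> (mat 1) X and A is correlation_mat (mat_sqrt \<rho>) (mat_sqrt \<rho>) X\<close>
definition correlation_mat ::
    "complex^'n^'n \<Rightarrow> complex^'n^'n \<Rightarrow> ('d \<Rightarrow> complex^'n^'n) \<Rightarrow> complex^'d^'d"
  where "correlation_mat P1 P2 X = (\<chi> i j. trace (P1 ** X j ** P2 ** X i))"

lemma cinner_correlation_mat:
  assumes "\<And>j. hermitian_mat (X j)"
  shows "cinner u (correlation_mat P1 P2 X *v w)
    = trace (P1 ** lincomb w X ** P2 ** adjoint_mat (lincomb u X))"
  unfolding adjoint_lincomb[OF assms] trace_lincomb_bilinear
  by (simp add: cinner_def matrix_vector_mult_def correlation_mat_def sum_distrib_left mult_ac)
    (rule sum.swap)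

lemma cinner_transpose_correlation_mat:
  assumes "\<And>j. hermitian_mat (X j)"
  shows "cinner u (transpose (correlation_mat P1 P2 X) *v w)
    = trace (P1 ** adjoint_mat (lincomb u X) ** P2 ** lincomb w X)"
  unfolding adjoint_lincomb[OF assms] trace_lincomb_bilinear
  by (simp add: cinner_def matrix_vector_mult_def correlation_mat_def transpose_def
      sum_distrib_left mult_ac)

lemma psd_correlation_mat_squares:
  fixes R T :: "complex^'n^'n"
  assumes R: "hermitian_mat R" and T: "hermitian_mat T" and X: "\<And>j. hermitian_mat (X j)"
  shows "psd (correlation_mat (R ** R) (T ** T) X)"
proof (rule psd_if_cinner_trace_gram)
  fix v
  define L where "L = lincomb v X"
  have "adjoint_mat (R ** L ** T) = T ** adjoint_mat L ** R"
    using R T by (simp add: adjoint_mat_mult hermitian_mat_def matrix_mul_assoc)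
  then have "trace (R ** R ** L ** (T ** T) ** adjoint_mat L)
      = trace ((R ** L ** T) ** adjoint_mat (R ** L ** T))"
    using trace_mul_sym[of R "R ** L ** T ** T ** adjoint_mat L"] by (simp add: matrix_mul_assoc)
  then show "\<exists>N::complex^'n^'n.
      cinner v (correlation_mat (R ** R) (T ** T) X *v v) = trace (N ** adjoint_mat N)"
    unfolding cinner_correlation_mat[OF X] L_def by (rule exI)
qed

lemma psd_correlation_mat_psd:
  assumes S: "psd S" and X: "\<And>j. hermitian_mat (X j)"
  shows "psd (correlation_mat S S X)"
proof -
  have R: "hermitian_mat (mat_sqrt S)" "mat_sqrt S ** mat_sqrt S = S"
    using psd_mat_sqrt[OF S] mat_sqrt_mult_self[OF S] by (simp_all add: psd_hermitian)
  show ?thesis using psd_correlation_mat_squares[OF R(1) R(1) X] by (simp add: R(2))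
qed

lemma real_mat_correlation_mat:
  assumes S: "hermitian_mat S" and X: "\<And>j. hermitian_mat (X j)"
  shows "real_mat (correlation_mat S S X)"
proof -
  have "cnj (trace (S ** X j ** S ** X i)) = trace (S ** X j ** S ** X i)" for i j
  proof -
    have "cnj (trace (S ** X j ** S ** X i)) = trace (X i ** S ** X j ** S)"
      using S X by (simp add: trace_adjoint_mat[symmetric] adjoint_mat_mult hermitian_mat_def
          matrix_mul_assoc)
    also have "\<dots> = trace (S ** X i ** S ** X j)"
      using trace_mul_sym[of "X i ** S ** X j" S] by (simp add: matrix_mul_assoc)
    also have "\<dots> = trace (S ** X j ** S ** X i)"
      using trace_mul_sym[of "S ** X i" "S ** X j"] by (simp add: matrix_mul_assoc)
    finally show ?thesis .
  qed
  then show ?thesis by (simp add: real_mat_iff_mat_cnj mat_cnj_def correlation_mat_def vec_eq_iff)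
qed

lemma psd_block2_correlation:
  fixes S :: "complex^'n^'n" and X :: "'d::finite \<Rightarrow> complex^'n^'n"
  assumes S: "hermitian_mat S" and X: "\<And>j. hermitian_mat (X j)"
  shows "psd (block2 (correlation_mat (S ** S) (mat 1) X) (correlation_mat S S X)
    (correlation_mat S S X) (transpose (correlation_mat (S ** S) (mat 1) X)))" (is "psd ?B")
proof (rule psd_if_cinner_trace_gram)
  fix v :: "complex^('d + 'd)"
  define U W where "U = lincomb (\<chi> a. v $ Inl a) X" and "W = lincomb (\<chi> a. v $ Inr a) X"
  have adj: "adjoint_mat (S ** U + W ** S) = adjoint_mat U ** S + S ** adjoint_mat W"
    using S by (simp add: adjoint_mat_add adjoint_mat_mult hermitian_mat_def)
  have "trace (S ** S ** U ** mat 1 ** adjoint_mat U) = trace (S ** U ** (adjoint_mat U ** S))"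
    using trace_mul_sym[of "S ** U ** adjoint_mat U" S] by (simp add: matrix_mul_assoc)
  moreover have "trace (S ** W ** S ** adjoint_mat U) = trace (W ** S ** (adjoint_mat U ** S))"
    using trace_mul_sym[of "W ** S ** adjoint_mat U" S] by (simp add: matrix_mul_assoc)
  moreover have "trace (S ** U ** S ** adjoint_mat W) = trace (S ** U ** (S ** adjoint_mat W))"
    by (simp add: matrix_mul_assoc)
  moreover have "trace (S ** S ** adjoint_mat W ** mat 1 ** W)
      = trace (W ** S ** (S ** adjoint_mat W))"
    using trace_mul_sym[of "S ** S" "adjoint_mat W ** W"]
      trace_mul_sym[of "W ** S ** S" "adjoint_mat W"]
    by (simp add: matrix_mul_assoc)
  ultimately have "cinner v (?B *v v) = trace ((S ** U + W ** S) ** adjoint_mat (S ** U + W ** S))"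
    unfolding cinner_block2 block_form_def cinner_correlation_mat[OF X]
      cinner_transpose_correlation_mat[OF X] adj U_def[symmetric] W_def[symmetric]
    by (simp add: matrix_add_ldistrib matrix_add_rdistrib trace_add algebra_simps)
  then show "\<exists>N::complex^'n^'n. cinner v (?B *v v) = trace (N ** adjoint_mat N)"
    by (rule exI)
qed

theorem lemma11:
  fixes \<rho> :: "complex^'n^'n" and X :: "'d::finite \<Rightarrow> complex^'n^'n"
    and A J :: "complex^'d^'d"
  assumes "density_op \<rho>"
    and "\<And>i. hermitian_mat (X i)"
    and "A = (\<chi> i j. trace (mat_sqrt \<rho> ** X j ** mat_sqrt \<rho> ** X i))"
    and "J = (\<chi> i j. trace (\<rho> ** X j ** X i))"
  shows "real_mat A \<and> real_mat (J # transpose J) \<and> loewner_le A (J # transpose J)"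
proof -
  have \<rho>: "psd \<rho>" using assms(1) by (simp add: density_op_def)
  define S where "S = mat_sqrt \<rho>"
  have S: "psd S" "hermitian_mat S" and SS: "S ** S = \<rho>"
    using psd_mat_sqrt[OF \<rho>] mat_sqrt_mult_self[OF \<rho>] by (simp_all add: S_def psd_hermitian)
  have A_eq: "A = correlation_mat S S X" using assms(3) by (simp add: correlation_mat_def S_def)
  have J_eq: "J = correlation_mat (S ** S) (mat 1) X"
    using assms(4) by (simp add: correlation_mat_def SS)
  have J: "psd J"
    using psd_correlation_mat_squares[OF S(2) hermitian_mat_one assms(2)] by (simp add: J_eq)
  have "psd A" unfolding A_eq by (rule psd_correlation_mat_psd[OF S(1) assms(2)])
  moreover have "psd (block2 J A A (transpose J))"
    unfolding A_eq J_eq by (rule psd_block2_correlation[OF S(2) assms(2)])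
  ultimately have "loewner_le A (J # transpose J)"
    using is_geo_mean_geo_mean[OF J psd_transpose[OF J]] unfolding is_geo_mean_def by blast
  then show ?thesis
    using real_mat_correlation_mat[OF S(2) assms(2)] real_mat_geo_mean_transpose[OF J]
    by (simp add: A_eq)
qed

end
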